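(* Let $\mathbf n=(n_1,\dots,n_r)$ with $r\ge1$ and $n_i\ge1$ for all $i$. If $k\ge\big\lfloor\frac12\sum_{i=1}^r n_i\big\rfloor$, then $\delta_{pr}(k,\mathbf n)\ge\sum_{i=1}^r n_i$.
   Context: $\Delta_m$ denotes the $m$-dimensional simplex; for $\mathbf n=(n_1,\dots,n_r)$, $\Delta_{\mathbf n}:=\Delta_{n_1}\times\dots\times\Delta_{n_r}$. The $k$-skeleton of a polytope is the poset of its faces of dimension at most $k$; two $k$-skeleta are combinatorially equivalent if these posets are isomorphic. A convex polytope is $(k,\mathbf n)$-PSN if its $k$-skeleton is combinatorially equivalent to that of $\Delta_{\mathbf n}$, and $(k,\mathbf n)$-PPSN if in addition it is the image under a linear projection of a polytope combinatorially equivalent to $\Delta_{\mathbf n}$. $\delta_{pr}(k,\mathbf n)$ is the smallest dimension of a $(k,\mathbf n)$-PPSN polytope. *)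

theory Defs
  imports "HOL-Analysis.Analysis"
begin

text \<open>Index set of the standard realization of the product of simplices
  Delta_{n_1} x ... x Delta_{n_r}: pairs (i,j) with i < r and j \<le> n_i.\<close>
definition simplex_index :: "nat list \<Rightarrow> (nat \<times> nat) set" where
  "simplex_index n = {(i, j). i < length n \<and> j \<le> n ! i}"

text \<open>Standard realization of Delta_n inside real^'c, using an injective
  placement e of the index set into the coordinates: the coordinates outside the
  image of e are zero, all others are nonnegative, and for each block i the
  coordinates (i,0),...,(i,n_i) sum to 1.\<close>
definition prod_simplex :: "nat list \<Rightarrow> (nat \<times> nat \<Rightarrow> 'c::finite) \<Rightarrow> (real^'c) set" where
  "prod_simplex n e = {x. (\<forall>c. c \<notin> e ` simplex_index n \<longrightarrow> x $ c = 0)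
      \<and> (\<forall>p\<in>simplex_index n. 0 \<le> x $ (e p))
      \<and> (\<forall>i<length n. (\<Sum>j\<le>n ! i. x $ (e (i, j))) = 1)}"

text \<open>The k-skeleton: faces (including the empty face) of dimension at most k.\<close>
definition skeleton :: "nat \<Rightarrow> 'a::euclidean_space set \<Rightarrow> 'a set set" where
  "skeleton k P = {F. F face_of P \<and> aff_dim F \<le> int k}"

definition poset_iso :: "'a set set \<Rightarrow> 'b set set \<Rightarrow> bool" where
  "poset_iso A B \<longleftrightarrow> (\<exists>f. bij_betw f A B \<and> (\<forall>F\<in>A. \<forall>G\<in>A. F \<subseteq> G \<longleftrightarrow> f F \<subseteq> f G))"

definition skel_equiv :: "nat \<Rightarrow> 'a::euclidean_space set \<Rightarrow> 'b::euclidean_space set \<Rightarrow> bool" where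
  "skel_equiv k P Q \<longleftrightarrow> poset_iso (skeleton k P) (skeleton k Q)"

definition comb_equiv :: "'a::real_vector set \<Rightarrow> 'b::real_vector set \<Rightarrow> bool" where
  "comb_equiv P Q \<longleftrightarrow> poset_iso {F. F face_of P} {F. F face_of Q}"

definition PSN :: "nat \<Rightarrow> nat list \<Rightarrow> 'a::euclidean_space set \<Rightarrow> (nat \<times> nat \<Rightarrow> 'c::finite) \<Rightarrow> bool" where
  "PSN k n P e \<longleftrightarrow> polytope P \<and> inj_on e (simplex_index n) \<and> skel_equiv k P (prod_simplex n e)"

definition PPSN :: "nat \<Rightarrow> nat list \<Rightarrow> 'a::euclidean_space set \<Rightarrow> (nat \<times> nat \<Rightarrow> 'c::finite)
    \<Rightarrow> 'b::euclidean_space set \<Rightarrow> ('b \<Rightarrow> 'a) \<Rightarrow> bool" where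
  "PPSN k n P e Q \<pi> \<longleftrightarrow> PSN k n P e \<and> polytope Q \<and> comb_equiv Q (prod_simplex n e)
      \<and> linear \<pi> \<and> P = \<pi> ` Q"

end

theory Submission
  imports Defs
begin

text \<open>
  Proof idea (a Radon-type argument).  Let N = n_1 + ... + n_r.  In the model Delta_n we
  single out N+1 vertices: the base vertex, choosing coordinate 0 in every block, and for
  every nonzero index (i,j) the vertex obtained from it by choosing j in block i.  An
  isomorphism of k-skeleta carries these vertices to N+1 distinct points p_u of P.  If
  aff_dim P < N, the points satisfy a nontrivial affine relation: sum of c_u p_u = 0 with
  sum of c_u = 0.  Let X be the set of nonzero indices whose coefficient is positive.  The
  coordinate face of Delta_n spanned by the zero coordinates and X has dimension at most |X|;
  if |X| <= k it corresponds to an exposed face of P containing every point with positive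
  coefficient, hence, by the relation, every point with nonzero coefficient, so no
  coefficient is negative.  The positive and negative classes have at most N elements
  together, so as k >= N div 2 this applies to c or to -c, and then to both: the relation is
  trivial, a contradiction.
\<close>

definition affine_relation :: "'i set \<Rightarrow> ('i \<Rightarrow> 'a::real_vector) \<Rightarrow> ('i \<Rightarrow> real) \<Rightarrow> bool" where
  "affine_relation I p c \<longleftrightarrow> sum c I = 0 \<and> (\<Sum>u\<in>I. c u *\<^sub>R p u) = 0"

lemma affine_relation_uminus [simp]:
  "affine_relation I p (\<lambda>u. - c u) \<longleftrightarrow> affine_relation I p c"
  by (simp add: affine_relation_def sum_negf)

lemma affine_dependent_family:
  fixes p :: "'i \<Rightarrow> 'a::euclidean_space"
  assumes fin: "finite I" and inj: "inj_on p I" and sub: "p ` I \<subseteq> S"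
    and small: "aff_dim S < int (card I) - 1"
  obtains c where "affine_relation I p c" and "\<exists>u\<in>I. c u \<noteq> 0"
proof -
  have "affine_dependent (p ` I)"
  proof (rule ccontr)
    assume "\<not> affine_dependent (p ` I)"
    then have "int (card (p ` I)) = aff_dim (p ` I) + 1" by (rule aff_dim_affine_independent)
    moreover have "aff_dim (p ` I) \<le> aff_dim S" using sub by (rule aff_dim_subset)
    ultimately show False using small card_image[OF inj] by simp
  qed
  then obtain U where U: "sum U (p ` I) = 0" "\<exists>v\<in>p ` I. U v \<noteq> 0" "(\<Sum>v\<in>p ` I. U v *\<^sub>R v) = 0"
    using affine_dependent_explicit_finite[of "p ` I"] fin by blast
  have "affine_relation I p (U \<circ> p)"
    using U(1,3) by (simp add: affine_relation_def sum.reindex[OF inj])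
  moreover have "\<exists>u\<in>I. (U \<circ> p) u \<noteq> 0" using U(2) by auto
  ultimately show thesis by (rule that)
qed

text \<open>Faces absorb affine relations: if an affine relation among points of P has all its points
  with positive coefficient on an exposed face G, then all its points with nonzero coefficient
  lie on G.  (Evaluate the supporting functional: every summand has the same sign.)\<close>
lemma exposed_face_affine_relation:
  fixes p :: "'i \<Rightarrow> 'a::euclidean_space"
  assumes G: "G exposed_face_of P" and fin: "finite I" and P: "p ` I \<subseteq> P"
    and rel: "affine_relation I p c"
    and pos: "\<And>v. v \<in> I \<Longrightarrow> 0 < c v \<Longrightarrow> p v \<in> G"
    and u: "u \<in> I" "c u \<noteq> 0"
  shows "p u \<in> G"
proof -
  obtain h b where hb: "P \<subseteq> {x. h \<bullet> x \<le> b}" "G = P \<inter> {x. h \<bullet> x = b}"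
    using G unfolding exposed_face_of_def by blast
  define t where "t v = c v * (h \<bullet> p v - b)" for v
  have "sum t I = h \<bullet> (\<Sum>v\<in>I. c v *\<^sub>R p v) - b * sum c I"
    by (simp add: t_def inner_sum_right sum_subtractf sum_distrib_left algebra_simps)
  then have sum_t: "sum t I = 0" using rel by (simp add: affine_relation_def)
  have t_nonneg: "0 \<le> t v" if v: "v \<in> I" for v
  proof (cases "0 < c v")
    case True
    then show ?thesis using pos[OF v] hb(2) by (simp add: t_def)
  next
    case False
    moreover have "h \<bullet> p v \<le> b" using hb(1) P v by auto
    ultimately show ?thesis by (simp add: t_def mult_nonpos_nonpos)
  qed
  have "t u = 0" using sum_t t_nonneg fin u(1) by (simp add: sum_nonneg_eq_0_iff)
  then have "h \<bullet> p u = b" using u(2) by (simp add: t_def)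
  then show ?thesis using hb(2) P u(1) by auto
qed

text \<open>A poset isomorphism of k-skeleta maps the empty face to the empty face and therefore
  point faces (the minimal nonempty ones) to point faces; here we need that every vertex of
  D comes from a vertex of the compact convex set P.\<close>
lemma skeleton_iso_singleton:
  fixes P :: "'a::euclidean_space set" and D :: "'b::euclidean_space set"
  assumes bij: "bij_betw f (skeleton k P) (skeleton k D)"
    and ord: "\<And>F G. F \<in> skeleton k P \<Longrightarrow> G \<in> skeleton k P \<Longrightarrow> F \<subseteq> G \<longleftrightarrow> f F \<subseteq> f G"
    and P: "convex P" "compact P"
    and v: "{v} \<in> skeleton k D"
  obtains p where "{p} \<in> skeleton k P" and "f {p} = {v}"
proof -
  have empty_P: "{} \<in> skeleton k P" and empty_D: "{} \<in> skeleton k D"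
    by (simp_all add: skeleton_def)
  have f_empty: "f {} = {}"
  proof -
    obtain G where "G \<in> skeleton k P" "f G = {}"
      using empty_D bij_betw_imp_surj_on[OF bij] by (metis imageE)
    then show ?thesis using ord[OF empty_P] by auto
  qed
  obtain G where G: "G \<in> skeleton k P" "f G = {v}"
    using v bij_betw_imp_surj_on[OF bij] by (metis imageE)
  have G_face: "G face_of P" using G(1) by (simp add: skeleton_def)
  have "G \<noteq> {}" using G(2) f_empty by auto
  then obtain p where p: "p extreme_point_of G"
    using extreme_point_exists_convex face_of_imp_compact[OF P G_face] face_of_imp_convex[OF G_face]
    by blast
  have "{p} face_of G" using p by (simp add: face_of_singleton)
  then have "{p} face_of P" using G_face by (rule face_of_trans)
  then have p_skel: "{p} \<in> skeleton k P" by (simp add: skeleton_def)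
  have "f {p} \<subseteq> {v}"
    using ord[OF p_skel G(1)] G(2) p by (simp add: extreme_point_of_def)
  moreover have "f {p} \<noteq> {}"
    using bij_betw_imp_inj_on[OF bij] p_skel empty_P f_empty by (metis inj_on_eq_iff insert_not_empty)
  ultimately show thesis using p_skel that by blast
qed

lemma skeleton_iso_family:
  fixes P :: "'a::euclidean_space set" and D :: "'b::euclidean_space set"
  assumes bij: "bij_betw f (skeleton k P) (skeleton k D)"
    and ord: "\<And>F G. F \<in> skeleton k P \<Longrightarrow> G \<in> skeleton k P \<Longrightarrow> F \<subseteq> G \<longleftrightarrow> f F \<subseteq> f G"
    and P: "convex P" "compact P"
    and v: "\<And>u. u \<in> I \<Longrightarrow> {v u} \<in> skeleton k D" and inj: "inj_on v I"
  obtains p where "inj_on p I" and "p ` I \<subseteq> P"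
    and "\<And>u G. u \<in> I \<Longrightarrow> G \<in> skeleton k P \<Longrightarrow> p u \<in> G \<longleftrightarrow> v u \<in> f G"
proof -
  have "\<forall>u\<in>I. \<exists>q. {q} \<in> skeleton k P \<and> f {q} = {v u}"
    using skeleton_iso_singleton[OF bij ord P v] by metis
  then obtain p where p: "\<And>u. u \<in> I \<Longrightarrow> {p u} \<in> skeleton k P \<and> f {p u} = {v u}"
    by metis
  have mem: "p u \<in> G \<longleftrightarrow> v u \<in> f G" if "u \<in> I" "G \<in> skeleton k P" for u G
    using ord[of "{p u}" G] p[OF that(1)] that(2) by auto
  have "inj_on p I"
    using p inj by (metis inj_on_def singleton_inject)
  moreover have "p ` I \<subseteq> P"
    using p by (auto simp: skeleton_def dest: face_of_imp_subset)
  ultimately show thesis using mem that by blast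
qed

definition selection :: "nat list \<Rightarrow> (nat \<Rightarrow> nat) \<Rightarrow> bool" where
  "selection n \<sigma> \<longleftrightarrow> (\<forall>i<length n. \<sigma> i \<le> n ! i)"

definition simplex_vertex :: "nat list \<Rightarrow> (nat \<times> nat \<Rightarrow> 'c::finite) \<Rightarrow> (nat \<Rightarrow> nat) \<Rightarrow> real^'c" where
  "simplex_vertex n e \<sigma> = (\<chi> c. if \<exists>i<length n. c = e (i, \<sigma> i) then 1 else 0)"

definition coord_face :: "nat list \<Rightarrow> (nat \<times> nat \<Rightarrow> 'c::finite) \<Rightarrow> (nat \<times> nat) set \<Rightarrow> (real^'c) set" where
  "coord_face n e T = {x \<in> prod_simplex n e. \<forall>p\<in>simplex_index n - T. x $ e p = 0}"

lemma finite_simplex_index: "finite (simplex_index n)"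
proof -
  have "simplex_index n \<subseteq> {..<length n} \<times> {..Max (set n)}"
    by (auto simp: simplex_index_def intro: le_trans[OF _ Max_ge] nth_mem)
  then show ?thesis by (rule finite_subset) auto
qed

lemma convex_prod_simplex: "convex (prod_simplex n e)"
  unfolding convex_def prod_simplex_def
  by (auto simp: sum.distrib sum_distrib_left[symmetric])

text \<open>Coordinate faces are faces: they are cut out by the supporting hyperplane on which the
  (nonnegative) sum of the coordinates outside T vanishes.\<close>
lemma coord_face_face_of:
  fixes e :: "nat \<times> nat \<Rightarrow> 'c::finite"
  shows "coord_face n e T face_of prod_simplex n e"
proof -
  define h :: "real^'c" where "h = (\<Sum>p\<in>simplex_index n - T. axis (e p) 1)"
  have h_inner: "h \<bullet> x = (\<Sum>p\<in>simplex_index n - T. x $ e p)" for x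
  proof -
    have "h \<bullet> x = (\<Sum>p\<in>simplex_index n - T. x \<bullet> axis (e p) 1)"
      unfolding h_def by (simp add: inner_commute inner_sum_right)
    then show ?thesis by (simp add: cart_eq_inner_axis)
  qed
  have nonneg: "0 \<le> h \<bullet> x" if "x \<in> prod_simplex n e" for x
    using that unfolding h_inner prod_simplex_def by (auto intro!: sum_nonneg)
  have "(\<Sum>p\<in>simplex_index n - T. x $ e p) = 0 \<longleftrightarrow> (\<forall>p\<in>simplex_index n - T. x $ e p = 0)"
    if "x \<in> prod_simplex n e" for x
    using that finite_simplex_index unfolding prod_simplex_def
    by (subst sum_nonneg_eq_0_iff) auto
  then have "coord_face n e T = prod_simplex n e \<inter> {x. h \<bullet> x = 0}"
    unfolding coord_face_def h_inner by auto
  then show ?thesis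
    using face_of_Int_supporting_hyperplane_ge[OF convex_prod_simplex nonneg] by simp
qed

context
  fixes n :: "nat list" and e :: "nat \<times> nat \<Rightarrow> 'c::finite"
  assumes inj: "inj_on e (simplex_index n)"
begin

lemma simplex_vertex_coord:
  assumes \<sigma>: "selection n \<sigma>" and ij: "(i, j) \<in> simplex_index n"
  shows "simplex_vertex n e \<sigma> $ e (i, j) = (if j = \<sigma> i then 1 else 0)"
proof -
  have "(\<exists>l<length n. e (i, j) = e (l, \<sigma> l)) \<longleftrightarrow> j = \<sigma> i"
  proof
    assume "\<exists>l<length n. e (i, j) = e (l, \<sigma> l)"
    then obtain l where l: "l < length n" "e (i, j) = e (l, \<sigma> l)" by blast
    have "(l, \<sigma> l) \<in> simplex_index n"
      using l \<sigma> by (simp add: selection_def simplex_index_def)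
    then show "j = \<sigma> i" using inj_onD[OF inj l(2) ij] by simp
  next
    assume "j = \<sigma> i"
    then show "\<exists>l<length n. e (i, j) = e (l, \<sigma> l)" using ij by (auto simp: simplex_index_def)
  qed
  then show ?thesis by (simp add: simplex_vertex_def)
qed

lemma simplex_vertex_outside:
  assumes "selection n \<sigma>" "c \<notin> e ` simplex_index n"
  shows "simplex_vertex n e \<sigma> $ c = 0"
  using assms by (auto simp: simplex_vertex_def selection_def simplex_index_def)

lemma simplex_vertex_mem:
  assumes \<sigma>: "selection n \<sigma>"
  shows "simplex_vertex n e \<sigma> \<in> prod_simplex n e"
proof -
  have "(\<Sum>j\<le>n ! i. simplex_vertex n e \<sigma> $ e (i, j)) = 1" if i: "i < length n" for i
  proof -
    have "(\<Sum>j\<le>n ! i. simplex_vertex n e \<sigma> $ e (i, j)) = (\<Sum>j\<le>n ! i. if j = \<sigma> i then 1 else 0)"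
      using i by (intro sum.cong) (auto simp: simplex_vertex_coord[OF \<sigma>] simplex_index_def)
    also have "\<dots> = 1" using \<sigma> i by (simp add: selection_def)
    finally show ?thesis .
  qed
  moreover have "0 \<le> simplex_vertex n e \<sigma> $ c" for c by (simp add: simplex_vertex_def)
  ultimately show ?thesis
    using simplex_vertex_outside[OF \<sigma>] unfolding prod_simplex_def by auto
qed

lemma simplex_vertex_in_coord_face:
  assumes \<sigma>: "selection n \<sigma>"
  shows "simplex_vertex n e \<sigma> \<in> coord_face n e T \<longleftrightarrow> (\<forall>i<length n. (i, \<sigma> i) \<in> T)"
proof -
  have "(\<forall>p\<in>simplex_index n - T. simplex_vertex n e \<sigma> $ e p = 0) \<longleftrightarrow> (\<forall>i<length n. (i, \<sigma> i) \<in> T)"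
  proof
    assume zero: "\<forall>p\<in>simplex_index n - T. simplex_vertex n e \<sigma> $ e p = 0"
    show "\<forall>i<length n. (i, \<sigma> i) \<in> T"
    proof (intro allI impI)
      fix i assume i: "i < length n"
      have "(i, \<sigma> i) \<in> simplex_index n" using i \<sigma> by (simp add: selection_def simplex_index_def)
      then show "(i, \<sigma> i) \<in> T"
        using zero simplex_vertex_coord[OF \<sigma>, of i "\<sigma> i"] by (metis DiffI zero_neq_one)
    qed
  next
    assume T: "\<forall>i<length n. (i, \<sigma> i) \<in> T"
    show "\<forall>p\<in>simplex_index n - T. simplex_vertex n e \<sigma> $ e p = 0"
    proof
      fix p assume p: "p \<in> simplex_index n - T"
      obtain i j where p_ij: "p = (i, j)" by force
      have "j \<noteq> \<sigma> i" using T p p_ij by (auto simp: simplex_index_def)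
      then show "simplex_vertex n e \<sigma> $ e p = 0" using simplex_vertex_coord[OF \<sigma>, of i j] p p_ij by auto
    qed
  qed
  then show ?thesis using simplex_vertex_mem[OF \<sigma>] by (simp add: coord_face_def)
qed

lemma simplex_vertex_eq:
  assumes \<sigma>: "selection n \<sigma>" and \<tau>: "selection n \<tau>"
    and eq: "simplex_vertex n e \<sigma> = simplex_vertex n e \<tau>" and i: "i < length n"
  shows "\<sigma> i = \<tau> i"
proof -
  have "(i, \<sigma> i) \<in> simplex_index n" using \<sigma> i by (simp add: selection_def simplex_index_def)
  then show ?thesis
    using simplex_vertex_coord[OF \<sigma>] simplex_vertex_coord[OF \<tau>] eq by (metis zero_neq_one)
qed

text \<open>Every vertex of the model is a face, the one cut out by the coordinates it selects.\<close>
lemma simplex_vertex_singleton_face: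
  assumes \<sigma>: "selection n \<sigma>"
  shows "{simplex_vertex n e \<sigma>} face_of prod_simplex n e"
proof -
  define T where "T = {(i, \<sigma> i) | i. i < length n}"
  have sub: "coord_face n e T \<subseteq> {simplex_vertex n e \<sigma>}"
  proof
    fix x assume x: "x \<in> coord_face n e T"
    have x_simplex: "x \<in> prod_simplex n e" using x by (simp add: coord_face_def)
    have x_zero: "x $ e (i, j) = 0" if "(i, j) \<in> simplex_index n" "j \<noteq> \<sigma> i" for i j
      using x that by (auto simp: coord_face_def T_def)
    have x_one: "x $ e (i, \<sigma> i) = 1" if i: "i < length n" for i
    proof -
      have "1 = (\<Sum>j\<le>n ! i. x $ e (i, j))" using x_simplex i by (simp add: prod_simplex_def)
      also have "\<dots> = (\<Sum>j\<le>n ! i. if j = \<sigma> i then x $ e (i, j) else 0)"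
        using i x_zero by (intro sum.cong) (auto simp: simplex_index_def)
      finally show ?thesis using \<sigma> i by (simp add: selection_def)
    qed
    have "x $ c = simplex_vertex n e \<sigma> $ c" for c
    proof (cases "c \<in> e ` simplex_index n")
      case True
      then obtain i j where ij: "(i, j) \<in> simplex_index n" "c = e (i, j)" by force
      have i: "i < length n" using ij(1) by (simp add: simplex_index_def)
      show ?thesis
        using x_zero[OF ij(1)] x_one[OF i] simplex_vertex_coord[OF \<sigma> ij(1)] ij(2)
        by (cases "j = \<sigma> i") simp_all
    qed (use x_simplex simplex_vertex_outside[OF \<sigma>] in \<open>simp add: prod_simplex_def\<close>)
    then show "x \<in> {simplex_vertex n e \<sigma>}" by (simp add: vec_eq_iff)
  qed
  moreover have "simplex_vertex n e \<sigma> \<in> coord_face n e T"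
    using simplex_vertex_in_coord_face[OF \<sigma>] by (auto simp: T_def)
  ultimately have "coord_face n e T = {simplex_vertex n e \<sigma>}" by blast
  then show ?thesis using coord_face_face_of[of n e T] by simp
qed

end

definition nonzero_index :: "nat list \<Rightarrow> (nat \<times> nat) set" where
  "nonzero_index n = {(i, j) \<in> simplex_index n. 1 \<le> j}"

definition zero_index :: "nat list \<Rightarrow> (nat \<times> nat) set" where
  "zero_index n = {(i, 0) | i. i < length n}"

definition unit_selection :: "nat \<times> nat \<Rightarrow> nat \<Rightarrow> nat" where
  "unit_selection q = (\<lambda>_. 0)(fst q := snd q)"

definition frame_selections :: "nat list \<Rightarrow> (nat \<Rightarrow> nat) set" where
  "frame_selections n = insert (\<lambda>_. 0) (unit_selection ` nonzero_index n)"

lemma finite_nonzero_index: "finite (nonzero_index n)"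
  by (rule finite_subset[OF _ finite_simplex_index]) (auto simp: nonzero_index_def)

lemma card_nonzero_index: "card (nonzero_index n) = sum_list n"
proof -
  have "nonzero_index n = Sigma {..<length n} (\<lambda>i. {1..n ! i})"
    by (auto simp: nonzero_index_def simplex_index_def)
  then have "card (nonzero_index n) = (\<Sum>i<length n. n ! i)" by (simp add: card_SigmaI)
  then show ?thesis by (simp add: sum_list_sum_nth atLeast0LessThan)
qed

lemma finite_frame_selections: "finite (frame_selections n)"
  using finite_nonzero_index by (simp add: frame_selections_def)

lemma selection_frame: "\<sigma> \<in> frame_selections n \<Longrightarrow> selection n \<sigma>"
  by (auto simp: frame_selections_def selection_def unit_selection_def nonzero_index_def
      simplex_index_def)

lemma frame_selection_beyond: "\<sigma> \<in> frame_selections n \<Longrightarrow> length n \<le> i \<Longrightarrow> \<sigma> i = 0"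
  by (auto simp: frame_selections_def unit_selection_def nonzero_index_def simplex_index_def)

lemma card_frame_selections: "card (frame_selections n) = Suc (sum_list n)"
proof -
  have "inj_on unit_selection (nonzero_index n)"
  proof
    fix q r assume q: "q \<in> nonzero_index n" and r: "r \<in> nonzero_index n"
      and eq: "unit_selection q = unit_selection r"
    have "snd q = unit_selection r (fst q)" using fun_cong[OF eq, of "fst q"] by (simp add: unit_selection_def)
    moreover have "snd r = unit_selection q (fst r)" using fun_cong[OF eq, of "fst r"] by (simp add: unit_selection_def)
    ultimately show "q = r"
      using q r by (cases q; cases r) (auto simp: unit_selection_def nonzero_index_def split: if_splits)
  qed
  moreover have "(\<lambda>_. 0) \<notin> unit_selection ` nonzero_index n"
  proof
    assume "(\<lambda>_. 0) \<in> unit_selection ` nonzero_index n"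
    then obtain q where q: "q \<in> nonzero_index n" "unit_selection q = (\<lambda>_. 0)" by force
    have "snd q = unit_selection q (fst q)" by (simp add: unit_selection_def)
    then show False using q by (simp add: nonzero_index_def split_beta)
  qed
  ultimately show ?thesis
    using finite_nonzero_index by (simp add: frame_selections_def card_image card_nonzero_index)
qed

context
  fixes n :: "nat list" and e :: "nat \<times> nat \<Rightarrow> 'c::finite"
  assumes inj: "inj_on e (simplex_index n)"
begin

text \<open>Frame selections vanish outside the blocks, so they are determined by their vertices.\<close>
lemma inj_on_frame_vertex: "inj_on (simplex_vertex n e) (frame_selections n)"
proof
  fix \<sigma> \<tau> assume \<sigma>: "\<sigma> \<in> frame_selections n" and \<tau>: "\<tau> \<in> frame_selections n"
    and eq: "simplex_vertex n e \<sigma> = simplex_vertex n e \<tau>"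
  have "\<sigma> i = \<tau> i" for i
  proof (cases "i < length n")
    case True
    then show ?thesis using simplex_vertex_eq[OF inj selection_frame[OF \<sigma>] selection_frame[OF \<tau>] eq] by blast
  qed (simp add: frame_selection_beyond[OF \<sigma>] frame_selection_beyond[OF \<tau>])
  then show "\<sigma> = \<tau>" by blast
qed

text \<open>Frame vertices are 0-dimensional faces, hence in every skeleton.\<close>
lemma frame_vertex_skeleton:
  "\<sigma> \<in> frame_selections n \<Longrightarrow> {simplex_vertex n e \<sigma>} \<in> skeleton k (prod_simplex n e)"
  using simplex_vertex_singleton_face[OF inj selection_frame] by (simp add: skeleton_def)

lemma zero_vertex_in_coord_face:
  "simplex_vertex n e (\<lambda>_. 0) \<in> coord_face n e (zero_index n \<union> X)"
  using simplex_vertex_in_coord_face[OF inj, of "\<lambda>_. 0"] by (simp add: selection_def zero_index_def)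

lemma unit_vertex_in_coord_face:
  assumes q: "q \<in> nonzero_index n"
  shows "simplex_vertex n e (unit_selection q) \<in> coord_face n e (zero_index n \<union> X) \<longleftrightarrow> q \<in> X"
proof -
  have "fst q < length n" "1 \<le> snd q" using q by (auto simp: nonzero_index_def simplex_index_def)
  moreover have "selection n (unit_selection q)"
    using q by (simp add: selection_frame frame_selections_def)
  ultimately show ?thesis
    by (cases q) (auto simp: simplex_vertex_in_coord_face[OF inj] unit_selection_def zero_index_def)
qed

lemma unit_vertex_step_coord:
  assumes q: "q \<in> nonzero_index n" and ij: "(i, j) \<in> simplex_index n"
  shows "(simplex_vertex n e (unit_selection q) - simplex_vertex n e (\<lambda>_. 0)) $ e (i, j)
    = (if q = (i, j) then 1 else 0) - (if j = 0 \<and> fst q = i then 1 else 0)"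
proof -
  have "selection n (unit_selection q)" "selection n (\<lambda>_. 0)"
    using q by (simp_all add: selection_frame frame_selections_def)
  moreover have "1 \<le> snd q" using q by (auto simp: nonzero_index_def)
  ultimately show ?thesis
    by (cases q) (auto simp: simplex_vertex_coord[OF inj _ ij] unit_selection_def)
qed

lemma coord_face_zero_coord:
  assumes X: "X \<subseteq> nonzero_index n" and x: "x \<in> coord_face n e (zero_index n \<union> X)"
    and i: "i < length n"
  shows "x $ e (i, 0) = 1 - (\<Sum>q\<in>X. if fst q = i then x $ e q else 0)"
proof -
  have x_zero: "x $ e p = 0" if "p \<in> simplex_index n" "p \<notin> zero_index n \<union> X" for p
    using x that by (auto simp: coord_face_def)
  have block: "{q \<in> nonzero_index n. fst q = i} = Pair i ` {1..n ! i}"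
    using i by (auto simp: nonzero_index_def simplex_index_def)
  have "(\<Sum>q\<in>X. if fst q = i then x $ e q else 0) = (\<Sum>q\<in>nonzero_index n. if fst q = i then x $ e q else 0)"
    using X finite_nonzero_index x_zero
    by (intro sum.mono_neutral_left) (auto simp: nonzero_index_def zero_index_def)
  also have "\<dots> = (\<Sum>q\<in>Pair i ` {1..n ! i}. x $ e q)"
    using finite_nonzero_index by (simp add: sum.inter_filter[symmetric] block)
  also have "\<dots> = (\<Sum>j\<in>{1..n ! i}. x $ e (i, j))"
    by (simp add: sum.reindex inj_on_def)
  also have "\<dots> = (\<Sum>j\<le>n ! i. x $ e (i, j)) - x $ e (i, 0)"
  proof -
    have "{..n ! i} = insert 0 {1..n ! i}" by auto
    then show ?thesis by simp
  qed
  also have "(\<Sum>j\<le>n ! i. x $ e (i, j)) = 1"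
    using x i by (simp add: coord_face_def prod_simplex_def)
  finally show ?thesis by simp
qed

lemma coord_face_decomposition:
  assumes X: "X \<subseteq> nonzero_index n" and x: "x \<in> coord_face n e (zero_index n \<union> X)"
  defines "v \<equiv> simplex_vertex n e"
  shows "x = v (\<lambda>_. 0) + (\<Sum>q\<in>X. x $ e q *\<^sub>R (v (unit_selection q) - v (\<lambda>_. 0)))"
proof -
  have x_simplex: "x \<in> prod_simplex n e" using x by (simp add: coord_face_def)
  have x_zero: "x $ e p = 0" if "p \<in> simplex_index n" "p \<notin> zero_index n \<union> X" for p
    using x that by (auto simp: coord_face_def)
  have finX: "finite X" using X finite_nonzero_index by (rule finite_subset)
  have selections: "selection n (\<lambda>_. 0)" "\<And>q. q \<in> X \<Longrightarrow> selection n (unit_selection q)"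
    using X by (auto simp: selection_frame frame_selections_def)
  have coord: "x $ c = v (\<lambda>_. 0) $ c + (\<Sum>q\<in>X. x $ e q * (v (unit_selection q) - v (\<lambda>_. 0)) $ c)" for c
  proof (cases "c \<in> e ` simplex_index n")
    case False
    then show ?thesis
      using x_simplex simplex_vertex_outside[OF inj _ False] selections
      by (simp add: prod_simplex_def v_def)
  next
    case True
    then obtain i j where ij: "(i, j) \<in> simplex_index n" "c = e (i, j)" by force
    have i: "i < length n" using ij(1) by (simp add: simplex_index_def)
    have step: "x $ e q * (v (unit_selection q) - v (\<lambda>_. 0)) $ e (i, j)
        = (if q = (i, j) then x $ e q else 0) - (if j = 0 \<and> fst q = i then x $ e q else 0)"
      if "q \<in> X" for q
      using unit_vertex_step_coord[OF subsetD[OF X that] ij(1)] by (simp add: v_def)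
    show ?thesis
    proof (cases "j = 0")
      case True
      have "(i, 0) \<notin> X" using X by (auto simp: nonzero_index_def)
      then have "(\<Sum>q\<in>X. x $ e q * (v (unit_selection q) - v (\<lambda>_. 0)) $ e (i, j))
          = (\<Sum>q\<in>X. - (if fst q = i then x $ e q else 0))"
        using step True by (intro sum.cong) auto
      moreover have "v (\<lambda>_. 0) $ e (i, j) = 1"
        using simplex_vertex_coord[OF inj selections(1) ij(1)] True by (simp add: v_def)
      ultimately show ?thesis
        using coord_face_zero_coord[OF X x i] ij(2) True by (simp add: sum_negf)
    next
      case False
      have "(\<Sum>q\<in>X. x $ e q * (v (unit_selection q) - v (\<lambda>_. 0)) $ e (i, j))
          = (\<Sum>q\<in>X. if q = (i, j) then x $ e q else 0)"
        using step False by (intro sum.cong) auto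
      also have "\<dots> = x $ e (i, j)"
        using finX x_zero[OF ij(1)] False by (auto simp: zero_index_def)
      finally show ?thesis
        using simplex_vertex_coord[OF inj selections(1) ij(1)] ij(2) False by (simp add: v_def)
    qed
  qed
  show ?thesis
  unfolding vec_eq_iff
  proof
    fix c
    show "x $ c = (v (\<lambda>_. 0) + (\<Sum>q\<in>X. x $ e q *\<^sub>R (v (unit_selection q) - v (\<lambda>_. 0)))) $ c"
      using coord[of c]
      by (simp only: vector_add_component sum_component vector_scaleR_component real_scaleR_def)
  qed
qed

lemma coord_face_aff_dim:
  assumes X: "X \<subseteq> nonzero_index n"
  shows "aff_dim (coord_face n e (zero_index n \<union> X)) \<le> int (card X)"
proof -
  define v where "v = simplex_vertex n e"
  define V where "V = insert (v (\<lambda>_. 0)) ((\<lambda>q. v (unit_selection q)) ` X)"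
  have finX: "finite X" using X finite_nonzero_index by (rule finite_subset)
  have "coord_face n e (zero_index n \<union> X) \<subseteq> affine hull V"
  proof
    fix x assume x: "x \<in> coord_face n e (zero_index n \<union> X)"
    have "(\<Sum>q\<in>X. x $ e q *\<^sub>R (v (unit_selection q) - v (\<lambda>_. 0)))
        \<in> span ((\<lambda>y. - v (\<lambda>_. 0) + y) ` (\<lambda>q. v (unit_selection q)) ` X)"
      by (intro span_sum span_scale span_base) auto
    then show "x \<in> affine hull V"
      unfolding V_def affine_hull_insert_span_gen
      using coord_face_decomposition[OF X x] by (auto simp: v_def)
  qed
  then have "aff_dim (coord_face n e (zero_index n \<union> X)) \<le> aff_dim V"
    using aff_dim_subset aff_dim_affine_hull by metis
  also have "\<dots> \<le> int (card V) - 1" using finX by (intro aff_dim_le_card) (simp add: V_def)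
  also have "\<dots> \<le> int (card X)"
  proof -
    have "card V \<le> Suc (card ((\<lambda>q. v (unit_selection q)) ` X))"
      by (simp add: V_def card_insert_le_m1)
    then show ?thesis using card_image_le[OF finX, of "\<lambda>q. v (unit_selection q)"] by linarith
  qed
  finally show ?thesis .
qed

end

text \<open>From now on P is a polyhedron whose k-skeleton is mapped onto that of Delta_n by f, and pt
  realises the frame vertices in P compatibly with f, as provided by skeleton_iso_family.\<close>
context
  fixes n :: "nat list" and e :: "nat \<times> nat \<Rightarrow> 'c::finite"
    and k :: nat and P :: "'a::euclidean_space set" and f and pt :: "(nat \<Rightarrow> nat) \<Rightarrow> 'a"
  assumes inj: "inj_on e (simplex_index n)"
    and polyhedron: "polyhedron P"
    and onto: "skeleton k (prod_simplex n e) \<subseteq> f ` skeleton k P"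
    and pt_P: "pt ` frame_selections n \<subseteq> P"
    and pt_mem: "\<And>\<sigma> G. \<sigma> \<in> frame_selections n \<Longrightarrow> G \<in> skeleton k P
                   \<Longrightarrow> pt \<sigma> \<in> G \<longleftrightarrow> simplex_vertex n e \<sigma> \<in> f G"
begin

text \<open>If at most k unit selections have positive coefficient in an affine relation among the
  realised frame, then none has a negative one: the coordinate face supported on the zero
  indices and the positive ones lies in the k-skeleton, and the corresponding exposed face of
  P absorbs the relation.\<close>
lemma frame_relation_one_sided:
  assumes rel: "affine_relation (frame_selections n) pt c"
    and few: "card {q \<in> nonzero_index n. 0 < c (unit_selection q)} \<le> k"
  shows "\<forall>q\<in>nonzero_index n. 0 \<le> c (unit_selection q)"
proof
  fix q assume q: "q \<in> nonzero_index n"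
  define X where "X = {q \<in> nonzero_index n. 0 < c (unit_selection q)}"
  define F where "F = coord_face n e (zero_index n \<union> X)"
  have X: "X \<subseteq> nonzero_index n" by (auto simp: X_def)
  have "F \<in> skeleton k (prod_simplex n e)"
    using coord_face_face_of coord_face_aff_dim[OF inj X] few
    by (auto simp: skeleton_def F_def X_def)
  then obtain G where G: "G \<in> skeleton k P" "f G = F" using onto by blast
  have exposed: "G exposed_face_of P"
    using G(1) exposed_face_of_polyhedron[OF polyhedron] by (simp add: skeleton_def)
  have "pt \<sigma> \<in> G" if "\<sigma> \<in> frame_selections n" "0 < c \<sigma>" for \<sigma>
    using that pt_mem[OF that(1) G(1)] zero_vertex_in_coord_face[OF inj]
      unit_vertex_in_coord_face[OF inj] by (auto simp: frame_selections_def G(2) F_def X_def)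
  then have "c (unit_selection q) \<noteq> 0 \<Longrightarrow> pt (unit_selection q) \<in> G"
    using exposed_face_affine_relation[OF exposed finite_frame_selections pt_P rel] q
    by (simp add: frame_selections_def)
  then show "0 \<le> c (unit_selection q)"
    using pt_mem[of "unit_selection q" G] G unit_vertex_in_coord_face[OF inj q, of X] q
    by (force simp: frame_selections_def F_def X_def)
qed

text \<open>With k at least half the number of nonzero indices, one of the two sign classes of an
  affine relation is small enough for the one-sided bound; applying it to c and to -c forces
  the relation to be trivial.\<close>
lemma frame_relation_trivial:
  assumes rel: "affine_relation (frame_selections n) pt c"
    and k: "sum_list n div 2 \<le> k"
  shows "\<forall>\<sigma>\<in>frame_selections n. c \<sigma> = 0"
proof -
  define X where "X = {q \<in> nonzero_index n. 0 < c (unit_selection q)}"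
  define Y where "Y = {q \<in> nonzero_index n. 0 < - c (unit_selection q)}"
  have nonneg: "\<forall>q\<in>nonzero_index n. 0 \<le> c (unit_selection q)" if "card X \<le> k"
    using frame_relation_one_sided[OF rel] that by (simp add: X_def)
  have nonpos: "\<forall>q\<in>nonzero_index n. 0 \<le> - c (unit_selection q)" if "card Y \<le> k"
    using frame_relation_one_sided[of "\<lambda>\<sigma>. - c \<sigma>"] rel that by (simp add: Y_def)
  have "card X + card Y = card (X \<union> Y)"
    using finite_nonzero_index by (intro card_Un_disjoint[symmetric]) (auto simp: X_def Y_def)
  also have "\<dots> \<le> card (nonzero_index n)"
    using finite_nonzero_index by (intro card_mono) (auto simp: X_def Y_def)
  finally have "card X \<le> k \<or> card Y \<le> k" using k card_nonzero_index[of n] by linarith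
  moreover have "card Y \<le> k" if "card X \<le> k"
  proof -
    have "Y = {}" using nonneg[OF that] by (auto simp: Y_def)
    then show ?thesis by simp
  qed
  moreover have "card X \<le> k" if "card Y \<le> k"
  proof -
    have "X = {}" using nonpos[OF that] by (auto simp: X_def)
    then show ?thesis by simp
  qed
  ultimately have units: "c (unit_selection q) = 0" if "q \<in> nonzero_index n" for q
    using nonneg nonpos that by force
  then have "sum c (frame_selections n) = c (\<lambda>_. 0)"
    using finite_nonzero_index by (auto simp: frame_selections_def sum.insert_if sum.neutral)
  then show ?thesis using rel units by (auto simp: affine_relation_def frame_selections_def)
qed

end

theorem theorem4p7:
  fixes n :: "nat list" and k :: nat
    and P :: "'a::euclidean_space set" and e :: "nat \<times> nat \<Rightarrow> 'c::finite"
    and Q :: "'b::euclidean_space set" and \<pi> :: "'b \<Rightarrow> 'a"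
  assumes "n \<noteq> []"
    and "\<forall>i\<in>set n. 1 \<le> i"
    and "sum_list n div 2 \<le> k"
    and "PPSN k n P e Q \<pi>"
  shows "int (sum_list n) \<le> aff_dim P"
proof (rule ccontr)
  assume small: "\<not> int (sum_list n) \<le> aff_dim P"
  have poly: "polytope P" and inj: "inj_on e (simplex_index n)"
    and iso: "poset_iso (skeleton k P) (skeleton k (prod_simplex n e))"
    using assms(4) unfolding PPSN_def PSN_def skel_equiv_def by blast+
  obtain f where f: "bij_betw f (skeleton k P) (skeleton k (prod_simplex n e))
      \<and> (\<forall>F\<in>skeleton k P. \<forall>G\<in>skeleton k P. F \<subseteq> G \<longleftrightarrow> f F \<subseteq> f G)"
    using iso unfolding poset_iso_def by (rule exE)
  have bij: "bij_betw f (skeleton k P) (skeleton k (prod_simplex n e))" using f by (rule conjunct1)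
  have ord: "F \<subseteq> G \<longleftrightarrow> f F \<subseteq> f G" if "F \<in> skeleton k P" "G \<in> skeleton k P" for F G
    using bspec[OF bspec[OF conjunct2[OF f] that(1)] that(2)] .
  obtain pt where pt_inj: "inj_on pt (frame_selections n)" and pt_P: "pt ` frame_selections n \<subseteq> P"
    and pt_mem: "\<And>\<sigma> G. \<sigma> \<in> frame_selections n \<Longrightarrow> G \<in> skeleton k P
                   \<Longrightarrow> pt \<sigma> \<in> G \<longleftrightarrow> simplex_vertex n e \<sigma> \<in> f G"
    by (rule skeleton_iso_family[OF bij ord polytope_imp_convex[OF poly] polytope_imp_compact[OF poly]
        frame_vertex_skeleton[OF inj] inj_on_frame_vertex[OF inj]]) blast+
  have "aff_dim P < int (card (frame_selections n)) - 1"
    using small by (simp add: card_frame_selections)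
  then obtain c where rel: "affine_relation (frame_selections n) pt c"
    and nontrivial: "\<exists>\<sigma>\<in>frame_selections n. c \<sigma> \<noteq> 0"
    by (rule affine_dependent_family[OF finite_frame_selections pt_inj pt_P])
  have "\<forall>\<sigma>\<in>frame_selections n. c \<sigma> = 0"
    using frame_relation_trivial[OF inj polytope_imp_polyhedron[OF poly]
        equalityD2[OF bij_betw_imp_surj_on[OF bij]] pt_P pt_mem rel assms(3)] .
  then show False using nontrivial by blast
qed

end
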